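(* Let $q$ be a prime power, $n\ge1$, $d\in\mathbb F_q$, and $P=\sum_{s\ge0}a_s\theta^s\in\mathbb F_q[\theta]$ nonzero; put $P_2(\theta)=P(\theta+d)$. For a polynomial $R=\sum_s b_s\theta^s$ let $\mathfrak M(R,n,T)$ be the infinite matrix with rows and columns indexed by $i,j\in\{0,1,2,\dots\}$ and entries $$\mathfrak M(R,n,T)_{ij}=\sum_{l=0}^nT^{n-l}(-1)^l\binom nl b_{(i+1)q-(j+1)-l},$$ where $b_s=0$ for $s<0$ or $s>\deg R$. Let $W$ be the infinite upper triangular matrix with $W_{ij}=\binom ji d^{j-i}$ for $j\ge i$ and $W_{ij}=0$ for $j<i$ (with $d^0=1$). Then $W$ is invertible, all products below involve only finite sums, and $$\mathfrak M(P_2,n,T-d)=W\,\mathfrak M(P,n,T)\,W^{-1},$$ where $\mathfrak M(P_2,n,T-d)$ denotes $\mathfrak M(P_2,n,T)$ with $T$ replaced by $T-d$.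
   Context: Binomial coefficients are read in $\mathbb F_q$. The inverse of $W$ is the matrix of the same form with $d$ replaced by $-d$. *)

theory Defs
  imports "HOL-Computational_Algebra.Polynomial" "HOL-Library.Cardinality"
begin

definition bcoef :: "'a::zero poly \<Rightarrow> int \<Rightarrow> 'a" where
  "bcoef R s = (if s < 0 then 0 else coeff R (nat s))"

text \<open>The matrix M(R,n,t) with t the value substituted for the indeterminate T;
  entries are polynomials in T, i.e. elements of 'a poly. q = CARD('a).\<close>
definition Mmat :: "'a::{field,finite} poly \<Rightarrow> nat \<Rightarrow> 'a poly \<Rightarrow> nat \<Rightarrow> nat \<Rightarrow> 'a poly" where
  "Mmat R n t = (\<lambda>i j. \<Sum>l\<le>n. t ^ (n - l) * (-1) ^ l * of_nat (n choose l)
      * [: bcoef R ((int i + 1) * int (CARD('a)) - (int j + 1) - int l) :])"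

definition Wmat :: "'a::field \<Rightarrow> nat \<Rightarrow> nat \<Rightarrow> 'a poly" where
  "Wmat d = (\<lambda>i j. if i \<le> j then [: of_nat (j choose i) * d ^ (j - i) :] else 0)"

definition fin_prod :: "(nat \<Rightarrow> nat \<Rightarrow> 'a::semiring_0) \<Rightarrow> (nat \<Rightarrow> nat \<Rightarrow> 'a) \<Rightarrow> bool" where
  "fin_prod A B = (\<forall>i j. finite {k. A i k * B k j \<noteq> 0})"

definition imat_mult :: "(nat \<Rightarrow> nat \<Rightarrow> 'a::semiring_0) \<Rightarrow> (nat \<Rightarrow> nat \<Rightarrow> 'a) \<Rightarrow> nat \<Rightarrow> nat \<Rightarrow> 'a" where
  "imat_mult A B = (\<lambda>i j. \<Sum>k\<in>{k. A i k * B k j \<noteq> 0}. A i k * B k j)"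

definition imat_id :: "nat \<Rightarrow> nat \<Rightarrow> 'a::{zero,one}" where
  "imat_id = (\<lambda>i j. if i = j then 1 else 0)"

end

theory Submission
  imports Defs
begin

(* Row i of M(R,n,T) lists the coefficients of X^((i+1)q-1-j), j = 0, 1, ..., of
   F = R(X) (T - X)^n, a polynomial in X over F_q[T]; that is, its (i,j) entry is the coefficient
   of X^(iq+q-1) in X^j F.  Multiplying by W^-1 on the right replaces X^j by (X - d)^j.  Multiplying
   by W on the left is the substitution X -> X + d: since (X + d)^q = X^q + d, the coefficient of
   X^(iq+q-1) in (X + d)^k vanishes unless k = mq + q - 1, and then it is W_im.  As
   F(X + d) = P2(X) (T - d - X)^n and (X - d)^j becomes X^j, the conjugate is M(P2,n,T-d). *)

lemma pcompose_power: "pcompose (p ^ k) r = pcompose p r ^ k"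
  by (induction k) (simp_all add: pcompose_mult pcompose_1)

lemma coeff_pcompose_monom_mult:
  fixes S R :: "'a::comm_semiring_1 poly"
  assumes "degree R < q" "r < q"
  shows "coeff (pcompose S (monom 1 q) * R) (i * q + r) = coeff S i * coeff R r"
proof (induction S arbitrary: i)
  case (pCons a S)
  have split: "pcompose (pCons a S) (monom 1 q) * R
      = smult a R + monom 1 q * (pcompose S (monom 1 q) * R)"
    by (simp add: pcompose_pCons algebra_simps)
  show ?case
  proof (cases i)
    case 0
    then show ?thesis
      using assms by (simp add: split coeff_monom_mult)
  next
    case (Suc i')
    have "coeff R (i * q + r) = 0"
      using assms by (intro coeff_eq_0) (simp add: Suc)
    then show ?thesis
      using pCons.IH[of i'] by (simp add: split Suc coeff_monom_mult)
  qed
qed simp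

lemma coeff_linear_power_below:
  "b \<le> m \<Longrightarrow> coeff ([:d, 1:] ^ b) m = (if b = m then 1 else (0::'a::comm_semiring_1))"
  by (auto simp: coeff_linear_power degree_linear_power intro: coeff_eq_0)

lemma coeff_linear_poly_power':
  "coeff ([:a, b:] ^ n) i = of_nat (n choose i) * b ^ i * (a::'a::comm_semiring_1) ^ (n - i)"
proof (cases "i \<le> n")
  case False
  have "degree ([:a, b:] ^ n) \<le> n"
    by (rule order_trans[OF degree_power_le]) (simp add: degree_pCons_le)
  with False show ?thesis
    by (simp add: coeff_eq_0 binomial_eq_0)
qed (rule coeff_linear_poly_power)

lemma coeff_const_linear_power:
  "coeff ([:[:d:], 1:] ^ k) i = [:coeff ([:d::'a::comm_semiring_1, 1:] ^ k) i:]"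
  by (simp add: coeff_linear_poly_power' poly_const_pow of_nat_poly mult.commute)

lemma coeff_pcompose_eq_sum:
  fixes p :: "'a::comm_semiring_1 poly"
  assumes "degree p < B"
  shows "coeff (pcompose p r) m = (\<Sum>k<B. coeff p k * coeff (r ^ k) m)"
proof -
  have "p = (\<Sum>k<B. monom (coeff p k) k)"
    using assms by (intro poly_eqI) (auto simp: coeff_sum coeff_eq_0)
  then have "pcompose p r = pcompose (\<Sum>k<B. monom (coeff p k) k) r"
    by simp
  also have "\<dots> = (\<Sum>k<B. smult (coeff p k) (r ^ k))"
    by (simp add: pcompose_sum monom_altdef pcompose_smult pcompose_power pcompose_pCons)
  finally show ?thesis
    by (simp add: coeff_sum)
qed

lemma coeff_mult_eq_sum_monom_mult:
  fixes G Y :: "'a::comm_semiring_1 poly"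
  assumes "degree Y \<le> j"
  shows "coeff (G * Y) N = (\<Sum>m\<le>j. coeff (monom 1 m * G) N * coeff Y m)"
proof -
  have "G * monom (coeff Y m) m = smult (coeff Y m) (monom 1 m * G)" for m
    by (simp add: monom_altdef mult.commute)
  then have "G * Y = (\<Sum>m\<le>j. smult (coeff Y m) (monom 1 m * G))"
    by (subst (1) poly_as_sum_of_monoms'[OF assms, symmetric]) (simp add: sum_distrib_left)
  then show ?thesis
    by (simp add: coeff_sum mult.commute)
qed

lemma lift_pcompose:
  fixes R :: "'a::comm_semiring_1 poly"
  shows "pcompose (map_poly (\<lambda>a. [:a:]) R) [:[:d:], 1:]
       = map_poly (\<lambda>a. [:a:]) (pcompose R [:d, 1:])"
proof (rule poly_eqI)
  fix m
  have "degree (map_poly (\<lambda>a. [:a:]) R) < Suc (degree R)"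
    by (simp add: le_imp_less_Suc map_poly_degree_leq)
  then have "coeff (pcompose (map_poly (\<lambda>a. [:a:]) R) [:[:d:], 1:]) m
      = [:\<Sum>k<Suc (degree R). coeff R k * coeff ([:d, 1:] ^ k) m:]"
    by (simp add: coeff_pcompose_eq_sum coeff_map_poly coeff_const_linear_power sum_to_poly
        mult.commute)
  also have "(\<Sum>k<Suc (degree R). coeff R k * coeff ([:d, 1:] ^ k) m)
      = coeff (pcompose R [:d, 1:]) m"
    by (rule coeff_pcompose_eq_sum[symmetric]) simp
  finally show "coeff (pcompose (map_poly (\<lambda>a. [:a:]) R) [:[:d:], 1:]) m
      = coeff (map_poly (\<lambda>a. [:a:]) (pcompose R [:d, 1:])) m"
    by (simp add: coeff_map_poly)
qed

lemma power_card_eq: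
  fixes x :: "'a::{field,finite}"
  shows "x ^ CARD('a) = x"
proof (cases "x = 0")
  case False
  have "x ^ CARD('a) * \<Prod>(UNIV - {0}) = x * (\<Prod>y\<in>UNIV - {0}. x * y)"
    using finite_UNIV_card_ge_0[where ?'a = 'a]
    by (simp add: prod.distrib card_Diff_singleton power_eq_if)
  also have "(\<Prod>y\<in>UNIV - {0}. x * y) = \<Prod>(UNIV - {0})"
    by (rule prod.reindex_bij_witness[of _ "\<lambda>y. y / x" "\<lambda>y. x * y"]) (use False in auto)
  finally show ?thesis
    by simp
qed (use finite_UNIV_card_ge_0[where ?'a = 'a] in auto)

(* No characteristic argument: (X + d)^q - X^q has degree < q and, by Fermat, is d at all q points. *)
lemma linear_power_card:
  fixes d :: "'a::{field,finite}"
  shows "[:d, 1:] ^ CARD('a) = pcompose [:d, 1:] (monom 1 CARD('a))"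
proof -
  let ?q = "CARD('a)"
  have q: "0 < ?q" by simp
  define p where "p = [:d, 1:] ^ ?q - monom 1 ?q"
  have "degree p \<le> ?q"
    unfolding p_def by (intro degree_diff_le) (simp_all add: degree_linear_power degree_monom_le)
  moreover have "coeff p ?q = 0"
    by (simp add: p_def coeff_linear_power)
  ultimately have "degree p < ?q"
    using q by (metis degree_0 le_neq_implies_less leading_coeff_0_iff less_not_refl)
  then have "p = [:d:]"
    by (intro poly_eqI_degree[where A = UNIV])
       (use q in \<open>simp_all add: p_def poly_monom power_card_eq\<close>)
  then show ?thesis
    by (simp add: p_def pcompose_pCons monom_altdef algebra_simps)
qed

lemma coeff_linear_power_card_digits:
  fixes d :: "'a::{field,finite}"
  assumes "r < CARD('a)"
  shows "coeff ([:d, 1:] ^ (m * CARD('a) + r)) (i * CARD('a) + (CARD('a) - 1))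
       = (if r = CARD('a) - 1 then coeff ([:d, 1:] ^ m) i else 0)"
proof -
  let ?q = "CARD('a)"
  have "[:d, 1:] ^ (m * ?q) = ([:d, 1:] ^ ?q) ^ m"
    by (metis power_mult mult.commute)
  then have "[:d, 1:] ^ (m * ?q + r) = pcompose ([:d, 1:] ^ m) (monom 1 ?q) * [:d, 1:] ^ r"
    by (simp add: power_add pcompose_power linear_power_card)
  moreover have "?q - 1 < ?q"
    by simp
  ultimately have "coeff ([:d, 1:] ^ (m * ?q + r)) (i * ?q + (?q - 1))
      = coeff ([:d, 1:] ^ m) i * coeff ([:d, 1:] ^ r) (?q - 1)"
    using assms by (simp only: coeff_pcompose_monom_mult degree_linear_power)
  then show ?thesis
    using assms by (simp add: coeff_linear_power_below)
qed

definition Mpoly :: "'a::comm_ring_1 poly \<Rightarrow> nat \<Rightarrow> 'a poly \<Rightarrow> 'a poly poly" where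
  "Mpoly R n t = map_poly (\<lambda>a. [:a:]) R * [:t, -1:] ^ n"

lemma pcompose_Mpoly:
  "pcompose (Mpoly R n t) [:[:d:], 1:] = Mpoly (pcompose R [:d, 1:]) n (t - [:d:])"
  by (simp add: Mpoly_def pcompose_mult pcompose_power lift_pcompose pcompose_pCons
      diff_conv_add_uminus)

lemma coeff_Mpoly:
  "coeff (Mpoly R n t) s
     = (\<Sum>l\<le>n. t ^ (n - l) * (-1) ^ l * of_nat (n choose l) * [:bcoef R (int s - int l):])"
proof -
  define f where
    "f l = t ^ (n - l) * (-1) ^ l * of_nat (n choose l) * [:bcoef R (int s - int l):]" for l
  have swap: "Mpoly R n t = [:t, -1:] ^ n * map_poly (\<lambda>a. [:a:]) R"
    by (simp add: Mpoly_def mult.commute)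
  have "coeff (Mpoly R n t) s = (\<Sum>l\<le>s. f l)"
    unfolding swap coeff_mult
    by (intro sum.cong)
       (auto simp: f_def coeff_linear_poly_power' coeff_map_poly bcoef_def nat_minus_as_int mult_ac)
  also have "\<dots> = (\<Sum>l\<le>s + n. f l)"
    by (intro sum.mono_neutral_left) (auto simp: f_def bcoef_def)
  also have "\<dots> = (\<Sum>l\<le>n. f l)"
    by (intro sum.mono_neutral_right) (auto simp: f_def binomial_eq_0)
  finally show ?thesis
    unfolding f_def .
qed

lemma Mmat_eq_coeff:
  fixes R :: "'a::{field,finite} poly"
  shows "Mmat R n t i j = coeff (monom 1 j * Mpoly R n t) (i * CARD('a) + (CARD('a) - 1))"
proof -
  let ?q = "CARD('a)"
  define N where "N = i * ?q + (?q - 1)"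
  have N: "int N = (int i + 1) * int ?q - 1"
    unfolding N_def using finite_UNIV_card_ge_0[where ?'a = 'a]
    by (cases ?q) (simp_all add: algebra_simps)
  show ?thesis
  proof (cases "j \<le> N")
    case True
    then have index: "(int i + 1) * int ?q - (int j + 1) = int (N - j)"
      using N by simp
    from True show ?thesis
      unfolding N_def[symmetric] Mmat_def index coeff_monom_mult coeff_Mpoly by simp
  next
    case False
    then have "(int i + 1) * int ?q - (int j + 1) - int l < 0" for l
      using N by linarith
    then have "Mmat R n t i j = 0"
      by (simp add: Mmat_def bcoef_def)
    with False show ?thesis
      unfolding N_def[symmetric] by (simp add: coeff_monom_mult)
  qed
qed

lemma Mmat_eq_0:
  fixes R :: "'a::{field,finite} poly"
  assumes "degree (Mpoly R n t) + j < k"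
  shows "Mmat R n t k j = 0"
proof -
  have "degree (monom 1 j * Mpoly R n t) \<le> j + degree (Mpoly R n t)"
    using degree_mult_le[of "monom 1 j" "Mpoly R n t"] by (simp add: degree_monom_eq)
  moreover have "k \<le> k * CARD('a)"
    by simp
  ultimately have "degree (monom 1 j * Mpoly R n t) < k * CARD('a) + (CARD('a) - 1)"
    using assms by linarith
  then show ?thesis
    by (simp add: Mmat_eq_coeff coeff_eq_0)
qed

lemma Wmat_eq_coeff: "Wmat d i k = coeff ([:[:d:], 1:] ^ k) i"
  unfolding coeff_const_linear_power
  by (simp add: Wmat_def coeff_linear_poly_power' binomial_eq_0 mult.commute)

lemma Wmat_eq_0: "j < k \<Longrightarrow> Wmat d k j = 0"
  by (simp add: Wmat_def)

lemma fin_prod_if_column_bounded: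
  assumes "\<And>k j. b j < k \<Longrightarrow> B k j = 0"
  shows "fin_prod A B"
  unfolding fin_prod_def
proof (intro allI)
  fix i j
  have "{k. A i k * B k j \<noteq> 0} \<subseteq> {..b j}"
    using assms by (auto simp flip: not_less)
  then show "finite {k. A i k * B k j \<noteq> 0}"
    using finite_subset by blast
qed

lemma imat_mult_eq_sum_if_column_bounded:
  assumes "\<And>k j. b j < k \<Longrightarrow> B k j = 0" and "b j \<le> c"
  shows "imat_mult A B i j = (\<Sum>k\<le>c. A i k * B k j)"
  unfolding imat_mult_def
proof (rule sum.mono_neutral_left)
  show "{k. A i k * B k j \<noteq> 0} \<subseteq> {..c}"
    using assms by (auto simp flip: not_less)
qed auto

lemma sum_Wmat_mult_coeff:
  fixes G :: "'a::{field,finite} poly poly"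
  assumes "degree G \<le> B"
  shows "(\<Sum>k\<le>B. Wmat d i k * coeff G (k * CARD('a) + (CARD('a) - 1)))
       = coeff (pcompose G [:[:d:], 1:]) (i * CARD('a) + (CARD('a) - 1))"
proof -
  let ?q = "CARD('a)"
  let ?N = "i * ?q + (?q - 1)"
  let ?g = "\<lambda>k. coeff G k * coeff ([:[:d:], 1:] ^ k) ?N"
  have "Suc B * 1 \<le> Suc B * ?q"
    by (rule mult_le_mono2) (simp add: Suc_le_eq)
  then have "degree G < Suc B * ?q"
    unfolding mult_1_right using assms by linarith
  then have "coeff (pcompose G [:[:d:], 1:]) ?N = (\<Sum>k<Suc B * ?q. ?g k)"
    by (rule coeff_pcompose_eq_sum)
  also have "\<dots> = (\<Sum>m<Suc B. \<Sum>k\<in>{m * ?q..<m * ?q + ?q}. ?g k)"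
    by (rule sum.nat_group[symmetric])
  also have "\<dots> = (\<Sum>m<Suc B. \<Sum>r<?q. ?g (m * ?q + r))"
  proof (rule sum.cong[OF refl])
    fix m
    show "(\<Sum>k\<in>{m * ?q..<m * ?q + ?q}. ?g k) = (\<Sum>r<?q. ?g (m * ?q + r))"
      by (rule sum.reindex_bij_witness[of _ "\<lambda>r. m * ?q + r" "\<lambda>k. k - m * ?q"]) auto
  qed
  also have "\<dots> = (\<Sum>m<Suc B. coeff G (m * ?q + (?q - 1)) * Wmat d i m)"
  proof (rule sum.cong[OF refl])
    fix m
    let ?X = "coeff G (m * ?q + (?q - 1)) * Wmat d i m"
    have summand: "?g (m * ?q + r) = (if r = ?q - 1 then ?X else 0)" if "r < ?q" for r
      unfolding Wmat_eq_coeff coeff_const_linear_power coeff_linear_power_card_digits[OF that]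
      by simp
    have "(\<Sum>r<?q. ?g (m * ?q + r)) = (\<Sum>r<?q. if r = ?q - 1 then ?X else 0)"
      by (rule sum.cong[OF refl], rule summand) simp
    also have "\<dots> = ?X"
      by (simp only: sum.delta finite_lessThan lessThan_iff) simp
    finally show "(\<Sum>r<?q. ?g (m * ?q + r)) = ?X" .
  qed
  finally show ?thesis
    by (simp add: lessThan_Suc_atMost mult.commute)
qed

lemma sum_Mmat_mult_Wmat:
  fixes R :: "'a::{field,finite} poly"
  shows "(\<Sum>m\<le>j. Mmat R n t k m * Wmat e m j)
       = coeff (Mpoly R n t * [:[:e:], 1:] ^ j) (k * CARD('a) + (CARD('a) - 1))"
proof -
  have "degree ([:[:e:], 1:] ^ j) \<le> j"
    by (simp add: degree_linear_power)
  then show ?thesis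
    by (simp add: coeff_mult_eq_sum_monom_mult Mmat_eq_coeff Wmat_eq_coeff)
qed

lemma Wmat_inverse: "imat_mult (Wmat d) (Wmat (-d)) = imat_id"
proof (intro ext)
  fix i j
  have "imat_mult (Wmat d) (Wmat (-d)) i j = (\<Sum>k\<le>j. Wmat d i k * Wmat (-d) k j)"
    by (rule imat_mult_eq_sum_if_column_bounded[of id]) (simp_all add: Wmat_eq_0)
  also have "\<dots> = (\<Sum>k<Suc j. coeff ([:[:-d:], 1:] ^ j) k * coeff ([:[:d:], 1:] ^ k) i)"
    by (simp add: Wmat_eq_coeff lessThan_Suc_atMost mult.commute)
  also have "\<dots> = coeff (pcompose ([:[:-d:], 1:] ^ j) [:[:d:], 1:]) i"
    by (rule coeff_pcompose_eq_sum[symmetric]) (simp add: degree_linear_power)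
  also have "pcompose ([:[:-d:], 1:] ^ j) [:[:d:], 1:] = monom 1 j"
    by (simp add: pcompose_power pcompose_pCons monom_altdef)
  finally show "imat_mult (Wmat d) (Wmat (-d)) i j = imat_id i j"
    by (simp add: imat_id_def)
qed

lemma fin_prod_Wmat: "fin_prod A (Wmat e)"
  by (rule fin_prod_if_column_bounded[where b = id]) (simp add: Wmat_eq_0)

lemma fin_prod_Mmat:
  fixes R :: "'a::{field,finite} poly"
  shows "fin_prod A (Mmat R n t)"
  by (rule fin_prod_if_column_bounded[where b = "\<lambda>j. degree (Mpoly R n t) + j"]) (rule Mmat_eq_0)

lemma Mmat_pcompose_eq_conj:
  fixes R :: "'a::{field,finite} poly"
  shows "Mmat (pcompose R [:d, 1:]) n (t - [:d:])
       = imat_mult (imat_mult (Wmat d) (Mmat R n t)) (Wmat (-d))"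
proof (intro ext)
  fix i j
  let ?q = "CARD('a)"
  let ?M = "Mmat R n t"
  let ?F = "Mpoly R n t"
  let ?Y = "[:[:-d:], 1:] ^ j"
  define D where "D = degree ?F"
  have inner: "imat_mult (Wmat d) ?M i m = (\<Sum>k\<le>D + j. Wmat d i k * ?M k m)"
    if "m \<le> j" for m
    by (rule imat_mult_eq_sum_if_column_bounded[where b = "\<lambda>j. D + j"])
       (use that in \<open>simp_all add: D_def Mmat_eq_0\<close>)
  have "imat_mult (imat_mult (Wmat d) ?M) (Wmat (-d)) i j
      = (\<Sum>m\<le>j. imat_mult (Wmat d) ?M i m * Wmat (-d) m j)"
    by (rule imat_mult_eq_sum_if_column_bounded[where b = id]) (simp_all add: Wmat_eq_0)
  also have "\<dots> = (\<Sum>m\<le>j. (\<Sum>k\<le>D + j. Wmat d i k * ?M k m) * Wmat (-d) m j)"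
    by (simp add: inner)
  also have "\<dots> = (\<Sum>k\<le>D + j. Wmat d i k * (\<Sum>m\<le>j. ?M k m * Wmat (-d) m j))"
    by (simp add: sum_distrib_left sum_distrib_right mult.assoc sum.swap[of _ "{..j}"])
  also have "\<dots> = (\<Sum>k\<le>D + j. Wmat d i k * coeff (?F * ?Y) (k * ?q + (?q - 1)))"
    by (simp only: sum_Mmat_mult_Wmat)
  also have "\<dots> = coeff (pcompose (?F * ?Y) [:[:d:], 1:]) (i * ?q + (?q - 1))"
  proof (rule sum_Wmat_mult_coeff)
    show "degree (?F * ?Y) \<le> D + j"
      unfolding D_def using degree_mult_le[of ?F ?Y] by (simp add: degree_linear_power)
  qed
  also have "pcompose (?F * ?Y) [:[:d:], 1:]
      = monom 1 j * Mpoly (pcompose R [:d, 1:]) n (t - [:d:])"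
    by (simp add: pcompose_mult pcompose_Mpoly pcompose_power pcompose_pCons monom_altdef)
  finally show "Mmat (pcompose R [:d, 1:]) n (t - [:d:]) i j
      = imat_mult (imat_mult (Wmat d) ?M) (Wmat (-d)) i j"
    by (simp add: Mmat_eq_coeff[of "pcompose R [:d, 1:]"])
qed

theorem proposition5p1p2:
  fixes P :: "'a::{field,finite} poly" and d :: 'a and n :: nat
  assumes "n \<ge> 1" and "P \<noteq> 0"
  defines "P2 \<equiv> pcompose P [:d, 1:]"
  shows "fin_prod (Wmat d) (Wmat (-d)) \<and> fin_prod (Wmat (-d)) (Wmat d)
       \<and> imat_mult (Wmat d) (Wmat (-d)) = imat_id
       \<and> imat_mult (Wmat (-d)) (Wmat d) = imat_id
       \<and> fin_prod (Wmat d) (Mmat P n [:0, 1:])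
       \<and> fin_prod (imat_mult (Wmat d) (Mmat P n [:0, 1:])) (Wmat (-d))
       \<and> Mmat P2 n [:-d, 1:]
           = imat_mult (imat_mult (Wmat d) (Mmat P n [:0, 1:])) (Wmat (-d))"
proof -
  have "Mmat P2 n [:-d, 1:] = imat_mult (imat_mult (Wmat d) (Mmat P n [:0, 1:])) (Wmat (-d))"
    using Mmat_pcompose_eq_conj[of P d n "[:0, 1:]"] by (simp add: P2_def)
  then show ?thesis
    using Wmat_inverse[of d] Wmat_inverse[of "-d"] by (simp add: fin_prod_Wmat fin_prod_Mmat)
qed

end
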